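(* Let $C$ be a finite, balanced configuration of height $h$ and type $(n_0,\ldots,n_h)$ (with $n_0=n_h=1$). Then $$F_{h,1}=-F_{0,1}=-F_C,\qquad (p_{h,1}-p_{0,1})F_C=\sum_{k=1}^h\frac{1}{n_k}.$$ In particular, the residual force $F_C$ never vanishes.
   Context: Let $h$ be a positive integer and $(n_0,\ldots,n_h)$ positive integers with $n_0=n_h=1$. A finite configuration of type $(n_0,\ldots,n_h)$ is a collection of complex numbers $(p_{k,i})_{0\le k\le h,1\le i\le n_k}$ such that, for each $k$, the points $p_{k,i}$ and $p_{k\pm1,j}$ are pairwise distinct. Set $c_k=1/n_k$ and use the convention $n_{-1}=n_{h+1}=0$ (empty sums). The forces are $$F_{k,i}=2\sum_{j\neq i}\frac{c_k^2}{p_{k,i}-p_{k,j}}-\sum_{j=1}^{n_{k+1}}\frac{c_kc_{k+1}}{p_{k,i}-p_{k+1,j}}-\sum_{j=1}^{n_{k-1}}\frac{c_kc_{k-1}}{p_{k,i}-p_{k-1,j}}$$ for $0\le k\le h$, $1\le i\le n_k$. The configuration is balanced if $F_{k,i}=0$ for $1\le k\le h-1$ and all $i$ (no condition on $F_{0,1}$, $F_{h,1}$). The residual force is $F_C=F_{0,1}$. *)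

theory Defs
  imports Complex_Main
begin

text \<open>A finite configuration of height h and type (n_0,...,n_h): the points are
  p k i for 0 <= k <= h and 1 <= i <= n k. Levels outside 0..h have no points
  (convention n_{-1} = n_{h+1} = 0).\<close>

definition level_size :: "nat \<Rightarrow> (nat \<Rightarrow> nat) \<Rightarrow> nat \<Rightarrow> nat" where
  "level_size h n k = (if k \<le> h then n k else 0)"

definition is_type :: "nat \<Rightarrow> (nat \<Rightarrow> nat) \<Rightarrow> bool" where
  "is_type h n \<longleftrightarrow> h \<ge> 1 \<and> (\<forall>k\<le>h. n k \<ge> 1) \<and> n 0 = 1 \<and> n h = 1"

definition finite_configuration ::
    "nat \<Rightarrow> (nat \<Rightarrow> nat) \<Rightarrow> (nat \<Rightarrow> nat \<Rightarrow> complex) \<Rightarrow> bool" where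
  "finite_configuration h n p \<longleftrightarrow> is_type h n \<and>
     (\<forall>k\<le>h. \<forall>i\<in>{1..n k}. \<forall>j\<in>{1..n k}. i \<noteq> j \<longrightarrow> p k i \<noteq> p k j) \<and>
     (\<forall>k<h. \<forall>i\<in>{1..n k}. \<forall>j\<in>{1..n (Suc k)}. p k i \<noteq> p (Suc k) j)"

definition cc :: "(nat \<Rightarrow> nat) \<Rightarrow> nat \<Rightarrow> complex" where
  "cc n k = 1 / of_nat (n k)"

definition force ::
    "nat \<Rightarrow> (nat \<Rightarrow> nat) \<Rightarrow> (nat \<Rightarrow> nat \<Rightarrow> complex) \<Rightarrow> nat \<Rightarrow> nat \<Rightarrow> complex" where
  "force h n p k i =
     2 * (\<Sum>j\<in>{1..n k} - {i}. (cc n k)^2 / (p k i - p k j))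
     - (\<Sum>j\<in>{1..level_size h n (Suc k)}. cc n k * cc n (Suc k) / (p k i - p (Suc k) j))
     - (if k = 0 then 0 else
         (\<Sum>j\<in>{1..level_size h n (k - 1)}. cc n k * cc n (k - 1) / (p k i - p (k - 1) j)))"

definition balanced ::
    "nat \<Rightarrow> (nat \<Rightarrow> nat) \<Rightarrow> (nat \<Rightarrow> nat \<Rightarrow> complex) \<Rightarrow> bool" where
  "balanced h n p \<longleftrightarrow> (\<forall>k. 1 \<le> k \<and> k \<le> h - 1 \<longrightarrow> (\<forall>i\<in>{1..n k}. force h n p k i = 0))"

definition residual_force ::
    "nat \<Rightarrow> (nat \<Rightarrow> nat) \<Rightarrow> (nat \<Rightarrow> nat \<Rightarrow> complex) \<Rightarrow> complex" where
  "residual_force h n p = force h n p 0 1"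

end

theory Submission imports Defs begin

text \<open>Sum the forces against a weight w k i. Every interaction between two points occurs
  twice, with opposite signs of the difference of positions, so the total only depends on
  sums over pairs. With weight 1 each pair cancels, so the forces add up to zero; with the
  positions themselves as weights each pair at level k contributes c_k^2 and each pair between
  levels k and k+1 contributes -c_k c_(k+1), which adds up to -sum_(k=1..h) 1/n_k. For a
  balanced configuration only F_(0,1) and F_(h,1) survive in these two sums.\<close>

lemma sum_off_diagonal_swap:
  fixes f :: "'b \<Rightarrow> 'b \<Rightarrow> 'a::comm_monoid_add"
  assumes "finite I"
  shows "(\<Sum>i\<in>I. \<Sum>j\<in>I-{i}. f i j) = (\<Sum>i\<in>I. \<Sum>j\<in>I-{i}. f j i)"
proof -
  have "{j\<in>I. i \<noteq> j} = I - {i}" and "{j\<in>I. j \<noteq> i} = I - {i}" for i by auto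
  with sum.swap_restrict[OF assms assms, of f "\<lambda>i j. i \<noteq> j"] show ?thesis by simp
qed

lemma sum_off_diagonal_pair_constant:
  fixes f :: "'b \<Rightarrow> 'b \<Rightarrow> 'a::comm_ring_1"
  assumes "finite I" and "\<And>i j. i \<in> I \<Longrightarrow> j \<in> I \<Longrightarrow> i \<noteq> j \<Longrightarrow> f i j + f j i = s"
  shows "2 * (\<Sum>i\<in>I. \<Sum>j\<in>I-{i}. f i j) = s * of_nat (card I) * (of_nat (card I) - 1)"
proof -
  have "2 * (\<Sum>i\<in>I. \<Sum>j\<in>I-{i}. f i j) = (\<Sum>i\<in>I. \<Sum>j\<in>I-{i}. f i j) + (\<Sum>i\<in>I. \<Sum>j\<in>I-{i}. f j i)"
    unfolding sum_off_diagonal_swap[OF assms(1), of f, symmetric] by (rule mult_2)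
  also have "\<dots> = (\<Sum>i\<in>I. \<Sum>j\<in>I-{i}. f i j + f j i)"
    by (simp only: sum.distrib)
  also have "\<dots> = (\<Sum>i\<in>I. \<Sum>j\<in>I-{i}. s)"
    using assms(2) by (intro sum.cong) auto
  also have "\<dots> = (\<Sum>i\<in>I. s * (of_nat (card I) - 1))"
  proof (rule sum.cong[OF refl])
    fix i assume "i \<in> I"
    with assms(1) have "card (I - {i}) = card I - 1" and "card I \<ge> 1"
      by (auto simp: card_Diff_singleton Suc_le_eq card_gt_0_iff)
    then show "(\<Sum>j\<in>I-{i}. s) = s * (of_nat (card I) - 1)"
      by (simp add: of_nat_diff mult.commute)
  qed
  also have "\<dots> = s * of_nat (card I) * (of_nat (card I) - 1)"
    by (simp only: sum_constant mult_ac)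
  finally show ?thesis .
qed

lemma sum_off_diagonal_inverse_differences:
  fixes q :: "'b \<Rightarrow> 'a::field_char_0"
  assumes "finite I"
  shows "(\<Sum>i\<in>I. \<Sum>j\<in>I-{i}. c / (q i - q j)) = 0"
proof -
  have "c / (q i - q j) + c / (q j - q i) = 0" for i j
    by (metis add.right_inverse divide_minus_right minus_diff_eq)
  then have "2 * (\<Sum>i\<in>I. \<Sum>j\<in>I-{i}. c / (q i - q j)) = 0"
    using sum_off_diagonal_pair_constant[OF assms, where f = "\<lambda>i j. c / (q i - q j)" and s = 0]
    by simp
  then show ?thesis by simp
qed

lemma sum_off_diagonal_weighted_inverse_differences:
  fixes q :: "'b \<Rightarrow> 'a::field"
  assumes "finite I" and "inj_on q I"
  shows "2 * (\<Sum>i\<in>I. \<Sum>j\<in>I-{i}. q i * c / (q i - q j))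
    = c * of_nat (card I) * (of_nat (card I) - 1)"
proof (rule sum_off_diagonal_pair_constant[OF assms(1)])
  fix i j assume "i \<in> I" "j \<in> I" "i \<noteq> j"
  with assms(2) have "q i - q j \<noteq> 0" by (auto dest: inj_onD)
  have "q j * c / (q j - q i) = - (q j * c / (q i - q j))"
    by (metis divide_minus_right minus_diff_eq)
  then have "q i * c / (q i - q j) + q j * c / (q j - q i) = c * (q i - q j) / (q i - q j)"
    by (simp add: diff_divide_distrib algebra_simps)
  with \<open>q i - q j \<noteq> 0\<close> show "q i * c / (q i - q j) + q j * c / (q j - q i) = c"
    by simp
qed

lemma weighted_force_sum:
  fixes w :: "nat \<Rightarrow> nat \<Rightarrow> complex"
  shows "(\<Sum>k=0..h. \<Sum>i=1..n k. w k i * force h n p k i) =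
    (\<Sum>k=0..h. 2 * (\<Sum>i=1..n k. \<Sum>j\<in>{1..n k}-{i}. w k i * (cc n k)^2 / (p k i - p k j)))
    - (\<Sum>k<h. \<Sum>i=1..n k. \<Sum>j=1..n (Suc k).
        cc n k * cc n (Suc k) * (w k i - w (Suc k) j) / (p k i - p (Suc k) j))"
proof -
  define A where "A k = (\<Sum>i=1..n k. \<Sum>j\<in>{1..n k}-{i}. w k i * (cc n k)^2 / (p k i - p k j))" for k
  define B where "B k = (\<Sum>i=1..n k. \<Sum>j=1..level_size h n (Suc k).
    w k i * (cc n k * cc n (Suc k) / (p k i - p (Suc k) j)))" for k
  define C where "C k = (\<Sum>i=1..n k. if k = 0 then 0 else (\<Sum>j=1..level_size h n (k - 1).
    w k i * (cc n k * cc n (k - 1) / (p k i - p (k - 1) j))))" for k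
  have level: "(\<Sum>i=1..n k. w k i * force h n p k i) = 2 * A k - B k - C k" for k
    unfolding A_def B_def C_def force_def
    by (cases "k = 0") (simp_all add: sum_distrib_left right_diff_distrib sum_subtractf mult_ac)
  have upward: "(\<Sum>k=0..h. B k) = (\<Sum>k<h. \<Sum>i=1..n k. \<Sum>j=1..n (Suc k).
      w k i * (cc n k * cc n (Suc k) / (p k i - p (Suc k) j)))"
    by (simp add: atLeast0AtMost lessThan_Suc_atMost[symmetric] B_def level_size_def)
  have downward: "(\<Sum>k=0..h. C k) = (\<Sum>k<h. \<Sum>i=1..n k. \<Sum>j=1..n (Suc k).
      w (Suc k) j * (cc n (Suc k) * cc n k / (p (Suc k) j - p k i)))"
  proof -
    have "(\<Sum>k=0..h. C k) = (\<Sum>k<Suc h. C k)"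
      by (simp add: atLeast0AtMost lessThan_Suc_atMost)
    also have "\<dots> = (\<Sum>k<h. C (Suc k))"
      by (subst sum.lessThan_Suc_shift) (simp add: C_def)
    also have "\<dots> = (\<Sum>k<h. \<Sum>j=1..n (Suc k). \<Sum>i=1..n k.
        w (Suc k) j * (cc n (Suc k) * cc n k / (p (Suc k) j - p k i)))"
      by (intro sum.cong refl) (simp add: C_def level_size_def)
    also have "\<dots> = (\<Sum>k<h. \<Sum>i=1..n k. \<Sum>j=1..n (Suc k).
        w (Suc k) j * (cc n (Suc k) * cc n k / (p (Suc k) j - p k i)))"
      by (rule sum.cong[OF refl], rule sum.swap)
    finally show ?thesis .
  qed
  have pair: "w k i * (cc n k * cc n (Suc k) / (p k i - q))
      + w (Suc k) j * (cc n (Suc k) * cc n k / (q - p k i))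
    = cc n k * cc n (Suc k) * (w k i - w (Suc k) j) / (p k i - q)" for k i j q
  proof -
    have "x / (q - p k i) = - (x / (p k i - q))" for x
      by (metis divide_minus_right minus_diff_eq)
    then show ?thesis by (simp add: algebra_simps diff_divide_distrib)
  qed
  have "(\<Sum>k=0..h. \<Sum>i=1..n k. w k i * force h n p k i) = (\<Sum>k=0..h. 2 * A k - B k - C k)"
    by (rule sum.cong[OF refl], rule level)
  also have "\<dots> = (\<Sum>k=0..h. 2 * A k) - ((\<Sum>k=0..h. B k) + (\<Sum>k=0..h. C k))"
    by (simp add: sum_subtractf)
  also have "(\<Sum>k=0..h. B k) + (\<Sum>k=0..h. C k) = (\<Sum>k<h. \<Sum>i=1..n k. \<Sum>j=1..n (Suc k).
      cc n k * cc n (Suc k) * (w k i - w (Suc k) j) / (p k i - p (Suc k) j))"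
    unfolding upward downward sum.distrib[symmetric] pair ..
  finally show ?thesis unfolding A_def .
qed

lemma force_sum_zero: "(\<Sum>k=0..h. \<Sum>i=1..n k. force h n p k i) = 0"
  using weighted_force_sum[where w = "\<lambda>_ _. 1"]
  by (simp add: sum_off_diagonal_inverse_differences)

lemma position_weighted_force_sum:
  assumes "finite_configuration h n p"
  shows "(\<Sum>k=0..h. \<Sum>i=1..n k. p k i * force h n p k i) = - (\<Sum>k=1..h. 1 / of_nat (n k))"
proof -
  have n_pos: "n k \<ge> 1" if "k \<le> h" for k
    using assms that by (simp add: finite_configuration_def is_type_def)
  have "n 0 = 1"
    using assms by (simp add: finite_configuration_def is_type_def)
  have level_term: "2 * (\<Sum>i=1..n k. \<Sum>j\<in>{1..n k}-{i}. p k i * (cc n k)^2 / (p k i - p k j))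
      = 1 - 1 / of_nat (n k)" if "k \<le> h" for k
  proof -
    have "inj_on (p k) {1..n k}"
      using assms that by (auto simp: finite_configuration_def inj_on_def)
    then show ?thesis
      using sum_off_diagonal_weighted_inverse_differences[of "{1..n k}" "p k" "(cc n k)^2"]
        n_pos[OF that]
      by (simp add: cc_def field_simps power2_eq_square)
  qed
  have cross_term: "(\<Sum>i=1..n k. \<Sum>j=1..n (Suc k).
      cc n k * cc n (Suc k) * (p k i - p (Suc k) j) / (p k i - p (Suc k) j)) = 1" if "k < h" for k
  proof -
    have "(\<Sum>i=1..n k. \<Sum>j=1..n (Suc k).
        cc n k * cc n (Suc k) * (p k i - p (Suc k) j) / (p k i - p (Suc k) j))
      = (\<Sum>i=1..n k. \<Sum>j=1..n (Suc k). cc n k * cc n (Suc k))"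
      using assms that by (intro sum.cong refl) (auto simp: finite_configuration_def)
    then show ?thesis
      using n_pos[of k] n_pos[of "Suc k"] that by (simp add: cc_def)
  qed
  have "(\<Sum>k=0..h. \<Sum>i=1..n k. p k i * force h n p k i)
      = (\<Sum>k=0..h. 1 - 1 / of_nat (n k)) - (\<Sum>k<h. 1)"
    unfolding weighted_force_sum using level_term cross_term
    by (intro arg_cong2[where f = minus] sum.cong) auto
  also have "\<dots> = - (\<Sum>k=1..h. 1 / of_nat (n k))"
    using \<open>n 0 = 1\<close> by (simp add: sum_subtractf sum.atLeast_Suc_atMost)
  finally show ?thesis .
qed

lemma balanced_weighted_force_sum:
  assumes "balanced h n p" and "h \<ge> 1" and "n 0 = 1" and "n h = 1"
  shows "(\<Sum>k=0..h. \<Sum>i=1..n k. w k i * force h n p k i)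
    = w 0 1 * force h n p 0 1 + w h 1 * force h n p h 1"
proof -
  obtain h' where h: "h = Suc h'" using assms(2) by (cases h) auto
  have "(\<Sum>k=1..h'. \<Sum>i=1..n k. w k i * force h n p k i) = 0"
    using assms(1) h by (intro sum.neutral) (auto simp: balanced_def)
  then show ?thesis
    using assms(3,4) h by (simp add: sum.atLeast_Suc_atMost)
qed

theorem proposition3p1:
  fixes h :: nat and n :: "nat \<Rightarrow> nat" and p :: "nat \<Rightarrow> nat \<Rightarrow> complex"
  assumes "finite_configuration h n p"
    and "balanced h n p"
  shows "force h n p h 1 = - force h n p 0 1 \<and>
         force h n p 0 1 = residual_force h n p \<and>
         (p h 1 - p 0 1) * residual_force h n p = (\<Sum>k=1..h. 1 / of_nat (n k)) \<and>
         residual_force h n p \<noteq> 0"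
proof -
  from assms(1) have h: "h \<ge> 1" and n_pos: "\<And>k. k \<le> h \<Longrightarrow> n k \<ge> 1" and "n 0 = 1" "n h = 1"
    by (auto simp: finite_configuration_def is_type_def)
  note boundary = balanced_weighted_force_sum[OF assms(2) h \<open>n 0 = 1\<close> \<open>n h = 1\<close>]
  have opposite: "force h n p h 1 = - force h n p 0 1"
    using force_sum_zero[of h n p] boundary[of "\<lambda>_ _. 1"]
    by (simp add: eq_neg_iff_add_eq_0 add.commute)
  have dipole: "(p h 1 - p 0 1) * force h n p 0 1 = (\<Sum>k=1..h. 1 / of_nat (n k))"
    using position_weighted_force_sum[OF assms(1)] boundary[of p] opposite
    by (simp add: algebra_simps)
  have "(\<Sum>k=1..h. 1 / real (n k)) > 0"
    using h n_pos by (intro sum_pos) (auto simp: less_eq_Suc_le)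
  moreover have "(\<Sum>k=1..h. 1 / of_nat (n k) :: complex) = of_real (\<Sum>k=1..h. 1 / real (n k))"
    by simp
  ultimately have "(\<Sum>k=1..h. 1 / of_nat (n k) :: complex) \<noteq> 0"
    by (metis of_real_eq_0_iff less_irrefl)
  then show ?thesis
    using opposite dipole by (auto simp: residual_force_def)
qed

end
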